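(* Let $v$ be a typical weight and let $X$ be an initial space such that for every $f\in X$ and $0\le r<1$ the function $f_r(z)=f(rz)$ is in $X$ and $\sup_{0\le r<1}\|f_r\|_X\le C\|f\|_X$ for a constant $C$ independent of $f$. Let $T$ be an intrinsic operator on $\mathcal{H}(\mathbb{D})$ such that $T:X\to\mathcal{B}_v$ is bounded and $Tf_r\in\mathcal{B}_{v,0}$ for all $f\in X$, $0\le r<1$. Then the following are equivalent: (i) $T:X\to\mathcal{B}_v$ is compact; (ii) $T:X\to\mathcal{B}_{v,0}$ is compact; (iii) $\lim_{|z|\to1}v(z)\|T^*K_{z,1}^{\mathcal{B}}\|=0$.
   Context: $\mathcal{H}(\mathbb{D})$ is the space of holomorphic functions on the unit disk $\mathbb{D}$ with the topology $\tau_{uc}$ of uniform convergence on compact subsets. A linear operator $T$ on $\mathcal{H}(\mathbb{D})$ is intrinsic if it maps $\tau_{uc}$-convergent sequences to $\tau_{uc}$-convergent sequences. An initial space is a Banach space $X\subset\mathcal{H}(\mathbb{D})$ containing the polynomials such that every sequence in the closed unit ball of $X$ has a subsequence converging in $\tau_{uc}$ to some function in $X$. A typical weight is a continuous radial $v:\mathbb{D}\to(0,1]$, non-increasing in $|z|$, with $v(z)\to0$ as $|z|\to1$. $\mathcal{B}_v=\{f:\sup_z v(z)|f'(z)|<\infty\}$ with norm $|f(0)|+\sup_z v(z)|f'(z)|$, $\mathcal{B}_{v,0}=\{f:\lim_{|z|\to1}v(z)|f'(z)|=0\}$. $K_{z,1}^{\mathcal{B}}$ is the derivative point evaluation $g\mapsto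 g'(z)$ on $\mathcal{B}_v$ and $T^*:\mathcal{B}_v^*\to X^*$ the adjoint of $T:X\to\mathcal{B}_v$. *)

theory Defs
  imports "HOL-Analysis.Analysis" "HOL-Computational_Algebra.Polynomial"
begin

type_synonym hfun = "complex \<Rightarrow> complex"

text \<open>H(D): holomorphic functions on the unit disc, normalised to be 0 off the disc
  so that each holomorphic function on D has a unique representative.\<close>
definition HD :: "hfun set" where
  "HD = {f. f holomorphic_on ball 0 1 \<and> (\<forall>z. z \<notin> ball 0 1 \<longrightarrow> f z = 0)}"

definition uc_conv :: "(nat \<Rightarrow> hfun) \<Rightarrow> hfun \<Rightarrow> bool" where
  "uc_conv F g \<longleftrightarrow> (\<forall>K. compact K \<and> K \<subseteq> ball 0 1 \<longrightarrow> uniform_limit K F g sequentially)"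

definition intrinsic :: "(hfun \<Rightarrow> hfun) \<Rightarrow> bool" where
  "intrinsic T \<longleftrightarrow>
     (\<forall>f\<in>HD. T f \<in> HD) \<and>
     (\<forall>f\<in>HD. \<forall>g\<in>HD. T (\<lambda>z. f z + g z) = (\<lambda>z. T f z + T g z)) \<and>
     (\<forall>f\<in>HD. \<forall>c. T (\<lambda>z. c * f z) = (\<lambda>z. c * T f z)) \<and>
     (\<forall>F f. (\<forall>n. F n \<in> HD) \<and> f \<in> HD \<and> uc_conv F f \<longrightarrow>
            (\<exists>g\<in>HD. uc_conv (\<lambda>n. T (F n)) g))"

definition polyD :: "complex poly \<Rightarrow> hfun" where
  "polyD p = (\<lambda>z. if z \<in> ball 0 1 then poly p z else 0)"

definition dil :: "real \<Rightarrow> hfun \<Rightarrow> hfun" where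
  "dil r f = (\<lambda>z. if z \<in> ball 0 1 then f (of_real r * z) else 0)"

definition banach_subspace :: "hfun set \<Rightarrow> (hfun \<Rightarrow> real) \<Rightarrow> bool" where
  "banach_subspace X nX \<longleftrightarrow>
     X \<subseteq> HD \<and> (\<lambda>z. 0) \<in> X \<and>
     (\<forall>f\<in>X. \<forall>g\<in>X. (\<lambda>z. f z + g z) \<in> X) \<and>
     (\<forall>f\<in>X. \<forall>c. (\<lambda>z. c * f z) \<in> X) \<and>
     (\<forall>f\<in>X. 0 \<le> nX f) \<and>
     (\<forall>f\<in>X. nX f = 0 \<longleftrightarrow> f = (\<lambda>z. 0)) \<and>
     (\<forall>f\<in>X. \<forall>c. nX (\<lambda>z. c * f z) = cmod c * nX f) \<and>
     (\<forall>f\<in>X. \<forall>g\<in>X. nX (\<lambda>z. f z + g z) \<le> nX f + nX g) \<and>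
     (\<forall>F. (\<forall>n. F n \<in> X) \<and>
          (\<forall>e>0. \<exists>N. \<forall>m\<ge>N. \<forall>n\<ge>N. nX (\<lambda>z. F m z - F n z) < e) \<longrightarrow>
          (\<exists>f\<in>X. (\<lambda>n. nX (\<lambda>z. F n z - f z)) \<longlonglongrightarrow> 0))"

definition initial_space :: "hfun set \<Rightarrow> (hfun \<Rightarrow> real) \<Rightarrow> bool" where
  "initial_space X nX \<longleftrightarrow>
     banach_subspace X nX \<and>
     (\<forall>p. polyD p \<in> X) \<and>
     (\<forall>F. (\<forall>n. F n \<in> X \<and> nX (F n) \<le> 1) \<longrightarrow>
          (\<exists>(\<phi>::nat\<Rightarrow>nat) g. strict_mono \<phi> \<and> g \<in> X \<and> uc_conv (F \<circ> \<phi>) g))"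

definition typical_weight :: "(complex \<Rightarrow> real) \<Rightarrow> bool" where
  "typical_weight v \<longleftrightarrow>
     continuous_on (ball 0 1) v \<and>
     (\<forall>z\<in>ball 0 1. 0 < v z \<and> v z \<le> 1) \<and>
     (\<forall>z\<in>ball 0 1. \<forall>w\<in>ball 0 1. cmod z = cmod w \<longrightarrow> v z = v w) \<and>
     (\<forall>z\<in>ball 0 1. \<forall>w\<in>ball 0 1. cmod z \<le> cmod w \<longrightarrow> v w \<le> v z) \<and>
     (\<forall>e>0. \<exists>\<rho><1. \<forall>z. \<rho> < cmod z \<and> cmod z < 1 \<longrightarrow> v z < e)"

definition Bv :: "(complex \<Rightarrow> real) \<Rightarrow> hfun set" where
  "Bv v = {f \<in> HD. bdd_above ((\<lambda>z. v z * cmod (deriv f z)) ` ball 0 1)}"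

definition Bv_norm :: "(complex \<Rightarrow> real) \<Rightarrow> hfun \<Rightarrow> real" where
  "Bv_norm v f = cmod (f 0) + (SUP z\<in>ball 0 1. v z * cmod (deriv f z))"

definition Bv0 :: "(complex \<Rightarrow> real) \<Rightarrow> hfun set" where
  "Bv0 v = {f \<in> Bv v. \<forall>e>0. \<exists>\<rho><1. \<forall>z. \<rho> < cmod z \<and> cmod z < 1 \<longrightarrow>
                 v z * cmod (deriv f z) < e}"

definition compact_op :: "(hfun \<Rightarrow> hfun) \<Rightarrow> hfun set \<Rightarrow> (hfun \<Rightarrow> real) \<Rightarrow>
                          (complex \<Rightarrow> real) \<Rightarrow> hfun set \<Rightarrow> bool" where
  "compact_op T X nX v Y \<longleftrightarrow>
     (\<forall>f\<in>X. T f \<in> Y) \<and>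
     (\<forall>F. (\<forall>n. F n \<in> X \<and> nX (F n) \<le> 1) \<longrightarrow>
          (\<exists>(\<phi>::nat\<Rightarrow>nat) g. strict_mono \<phi> \<and> g \<in> Y \<and>
                 (\<lambda>n. Bv_norm v (\<lambda>z. T (F (\<phi> n)) z - g z)) \<longlonglongrightarrow> 0))"

text \<open>Norm of T^* K_{z,1}: the norm of the functional f \<mapsto> (Tf)'(z) on X.\<close>
definition adj_Kz_norm :: "(hfun \<Rightarrow> hfun) \<Rightarrow> hfun set \<Rightarrow> (hfun \<Rightarrow> real) \<Rightarrow> complex \<Rightarrow> real" where
  "adj_Kz_norm T X nX z = (SUP f\<in>{f\<in>X. nX f \<le> 1}. cmod (deriv (T f) z))"

end

theory Submission
  imports Defs "HOL-Complex_Analysis.Complex_Analysis"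
begin

text \<open>
  (i) \<open>\<Rightarrow>\<close> (ii): each \<open>f \<in> X\<close> is the locally uniform limit of its dilations \<open>f\<^sub>r\<close>, whose images lie
  in \<open>B\<^sub>v\<^sub>,\<^sub>0\<close>. Compactness yields a \<open>B\<^sub>v\<close>-convergent subsequence of the \<open>T f\<^sub>r\<close>; its limit lies
  in the closed subspace \<open>B\<^sub>v\<^sub>,\<^sub>0\<close>, and it equals \<open>T f\<close> because \<open>T\<close> is intrinsic and
  \<open>B\<^sub>v\<close>-convergence controls \<open>g(0)\<close> and \<open>g'\<close> pointwise.

  (ii) \<open>\<Rightarrow>\<close> (iii): if \<open>v(z)\<parallel>T\<^sup>*K\<^sub>z\<parallel>\<close> stayed above \<open>e\<close> along points \<open>z\<^sub>n\<close> tending to the circle, unit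
  vectors \<open>f\<^sub>n\<close> with \<open>v(z\<^sub>n)|(T f\<^sub>n)'(z\<^sub>n)| > e/2\<close> would have no subsequence converging in \<open>B\<^sub>v\<^sub>,\<^sub>0\<close>,
  since the weighted derivatives of a convergent sequence with limit in \<open>B\<^sub>v\<^sub>,\<^sub>0\<close> are uniformly
  small near the circle.

  (iii) \<open>\<Rightarrow>\<close> (ii): \<open>|(T f)'(z)| \<le> \<parallel>T\<^sup>*K\<^sub>z\<parallel> \<parallel>f\<parallel>\<close>. A bounded sequence has a locally uniformly
  convergent subsequence in \<open>X\<close>, and its images converge in \<open>B\<^sub>v\<close>: near the circle the weighted
  derivatives are uniformly small by (iii), while on a smaller disc Cauchy's estimate turns
  locally uniform convergence into uniform convergence of derivatives.
\<close>

section \<open>Functions vanishing at the unit circle\<close>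

definition vanishes_at_circle :: "(complex \<Rightarrow> real) \<Rightarrow> bool" where
  "vanishes_at_circle u \<longleftrightarrow> (\<forall>e>0. \<exists>\<rho><1. \<forall>z. \<rho> < cmod z \<and> cmod z < 1 \<longrightarrow> u z < e)"

lemma vanishes_at_circleI:
  assumes "\<And>e. e > 0 \<Longrightarrow> \<exists>\<rho><1. \<forall>z. \<rho> < cmod z \<and> cmod z < 1 \<longrightarrow> u z < e"
  shows "vanishes_at_circle u"
  using assms unfolding vanishes_at_circle_def by blast

lemma vanishes_at_circleE:
  assumes "vanishes_at_circle u" "e > 0"
  obtains \<rho> where "\<rho> < 1" "\<And>z. \<rho> < cmod z \<Longrightarrow> cmod z < 1 \<Longrightarrow> u z < e"
  using assms unfolding vanishes_at_circle_def by blast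

lemma vanishes_at_circle_le_mult:
  assumes u: "vanishes_at_circle u" and c: "0 \<le> c"
    and le: "\<And>z. z \<in> ball 0 1 \<Longrightarrow> w z \<le> c * u z"
  shows "vanishes_at_circle w"
proof (rule vanishes_at_circleI)
  fix e :: real assume e: "e > 0"
  obtain \<rho> where "\<rho> < 1" and \<rho>: "\<And>z. \<rho> < cmod z \<Longrightarrow> cmod z < 1 \<Longrightarrow> u z < e / (c + 1)"
    using vanishes_at_circleE[OF u, of "e / (c + 1)"] e c by auto
  have "w z < e" if z: "\<rho> < cmod z" "cmod z < 1" for z
  proof -
    have "w z \<le> c * (e / (c + 1))"
      using le[of z] mult_left_mono[OF less_imp_le[OF \<rho>[OF z]] c] z by simp
    also have "\<dots> < e" using c e by (simp add: field_simps)
    finally show ?thesis .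
  qed
  with \<open>\<rho> < 1\<close> show "\<exists>\<rho><1. \<forall>z. \<rho> < cmod z \<and> cmod z < 1 \<longrightarrow> w z < e" by blast
qed

lemma vanishes_at_circle_approx:
  assumes "\<And>e. e > 0 \<Longrightarrow> \<exists>u. vanishes_at_circle u \<and> (\<forall>z\<in>ball 0 1. w z \<le> u z + e)"
  shows "vanishes_at_circle w"
proof (rule vanishes_at_circleI)
  fix e :: real assume e: "e > 0"
  then obtain u where u: "vanishes_at_circle u" and le: "\<And>z. z \<in> ball 0 1 \<Longrightarrow> w z \<le> u z + e / 2"
    using assms[of "e / 2"] by auto
  obtain \<rho> where "\<rho> < 1" and \<rho>: "\<And>z. \<rho> < cmod z \<Longrightarrow> cmod z < 1 \<Longrightarrow> u z < e / 2"
    using vanishes_at_circleE[OF u, of "e / 2"] e by auto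
  have "w z < e" if "\<rho> < cmod z" "cmod z < 1" for z
    using le[of z] \<rho>[OF that] that by simp
  with \<open>\<rho> < 1\<close> show "\<exists>\<rho><1. \<forall>z. \<rho> < cmod z \<and> cmod z < 1 \<longrightarrow> w z < e" by blast
qed

section \<open>Holomorphic functions on the disc\<close>

lemma HD_holomorphic: "f \<in> HD \<Longrightarrow> f holomorphic_on ball 0 1"
  by (simp add: HD_def)

lemma HD_outside: "f \<in> HD \<Longrightarrow> z \<notin> ball 0 1 \<Longrightarrow> f z = 0"
  by (simp add: HD_def)

lemma HD_const_0: "(\<lambda>z. 0) \<in> HD"
  by (simp add: HD_def)

lemma HD_diff: "f \<in> HD \<Longrightarrow> g \<in> HD \<Longrightarrow> (\<lambda>z. f z - g z) \<in> HD"
  unfolding HD_def by (auto intro: holomorphic_on_diff)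

lemma HD_field_differentiable: "f \<in> HD \<Longrightarrow> z \<in> ball 0 1 \<Longrightarrow> f field_differentiable (at z)"
  by (rule holomorphic_on_imp_differentiable_at[OF HD_holomorphic open_ball])

lemma deriv_HD_diff:
  "f \<in> HD \<Longrightarrow> g \<in> HD \<Longrightarrow> z \<in> ball 0 1 \<Longrightarrow> deriv (\<lambda>w. f w - g w) z = deriv f z - deriv g z"
  by (rule deriv_diff[OF HD_field_differentiable HD_field_differentiable])

lemma deriv_HD_cmult: "f \<in> HD \<Longrightarrow> z \<in> ball 0 1 \<Longrightarrow> deriv (\<lambda>w. c * f w) z = c * deriv f z"
  by (rule deriv_cmult[OF HD_field_differentiable])

lemma HD_eqI_deriv:
  assumes f: "f \<in> HD" and g: "g \<in> HD"
    and deriv_eq: "\<And>z. z \<in> ball 0 1 \<Longrightarrow> deriv f z = deriv g z" and "f 0 = g 0"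
  shows "f = g"
proof -
  define d where "d = (\<lambda>z. f z - g z)"
  have d: "d \<in> HD" unfolding d_def by (rule HD_diff[OF f g])
  have "(d has_field_derivative 0) (at x within ball 0 1)" if x: "x \<in> ball 0 1" for x
  proof -
    have "deriv d x = 0" unfolding d_def using deriv_HD_diff[OF f g x] deriv_eq[OF x] by simp
    then show ?thesis
      using HD_field_differentiable[OF d x] DERIV_deriv_iff_field_differentiable
      by (metis has_field_derivative_at_within)
  qed
  then obtain c where c: "\<And>x. x \<in> ball 0 1 \<Longrightarrow> d x = c"
    using has_field_derivative_zero_constant[OF convex_ball] by metis
  then have "c = 0" using \<open>f 0 = g 0\<close> unfolding d_def by (metis centre_in_ball right_minus_eq zero_less_one)
  have "f z = g z" for z
    using c[of z] \<open>c = 0\<close> HD_outside[OF f, of z] HD_outside[OF g, of z] unfolding d_def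
    by (cases "z \<in> ball 0 1") auto
  then show ?thesis ..
qed

lemma norm_deriv_le_Cauchy:
  assumes hol: "h holomorphic_on S" and sub: "cball z \<delta> \<subseteq> S" and \<delta>: "0 < \<delta>"
    and bound: "\<And>w. w \<in> cball z \<delta> \<Longrightarrow> cmod (h w) \<le> B"
  shows "cmod (deriv h z) \<le> B / \<delta>"
proof -
  have "norm ((deriv ^^ 1) h z) \<le> fact 1 * B / \<delta> ^ 1"
  proof (rule Cauchy_inequality[OF _ _ \<delta>])
    show "h holomorphic_on ball z \<delta>"
      using hol sub ball_subset_cball holomorphic_on_subset by blast
    show "continuous_on (cball z \<delta>) h"
      using holomorphic_on_imp_continuous_on[OF hol] sub continuous_on_subset by blast
    show "norm (h w) \<le> B" if "norm (z - w) = \<delta>" for w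
      using bound that by (simp add: dist_norm)
  qed
  then show ?thesis by simp
qed

lemma norm_deriv_le_Cauchy_concentric:
  assumes hol: "h holomorphic_on S" and sub: "cball 0 (R + \<delta>) \<subseteq> S" and \<delta>: "0 < \<delta>"
    and z: "cmod z \<le> R" and bound: "\<And>w. cmod w \<le> R + \<delta> \<Longrightarrow> cmod (h w) \<le> B"
  shows "cmod (deriv h z) \<le> B / \<delta>"
proof (rule norm_deriv_le_Cauchy[OF hol _ \<delta>])
  have inner: "cmod w \<le> R + \<delta>" if "w \<in> cball z \<delta>" for w
    using that z norm_triangle_ineq2[of w z] by (simp add: dist_norm norm_minus_commute)
  then show "cball z \<delta> \<subseteq> S" using sub by auto
  show "cmod (h w) \<le> B" if "w \<in> cball z \<delta>" for w
    using bound inner that by blast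
qed

section \<open>Locally uniform convergence\<close>

lemma uc_conv_pointwise:
  assumes "uc_conv F f" "z \<in> ball 0 1"
  shows "(\<lambda>n. F n z) \<longlonglongrightarrow> f z"
proof -
  have "uniform_limit {z} F f sequentially"
    using assms unfolding uc_conv_def by (metis compact_sing empty_subsetI insert_subset)
  then show ?thesis by simp
qed

lemma uc_conv_subseq:
  assumes "uc_conv F f" "strict_mono \<phi>"
  shows "uc_conv (F \<circ> \<phi>) f"
  using assms(1) unfolding uc_conv_def comp_def
  by (auto intro: filterlim_compose[OF _ filterlim_subseq[OF assms(2)]])

lemma uc_conv_deriv:
  assumes F: "\<And>n. F n \<in> HD" and lim: "uc_conv F f" and z: "z \<in> ball 0 1"
  shows "(\<lambda>n. deriv (F n) z) \<longlonglongrightarrow> deriv f z"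
proof -
  obtain r where r: "r > 0" "cball z r \<subseteq> ball 0 1"
    using open_contains_cball_eq[OF open_ball] z by blast
  have "uniform_limit (cball z r) F f sequentially"
    using lim r(2) unfolding uc_conv_def by (simp add: compact_cball)
  then have "uniform_limit (ball z r) F f sequentially"
    by (rule uniform_limit_on_subset) (rule ball_subset_cball)
  moreover have "F n holomorphic_on ball z r" for n
    using HD_holomorphic[OF F] r ball_subset_cball holomorphic_on_subset by blast
  ultimately show ?thesis
    using r(1) by (intro deriv_complex_uniform_limit always_eventually allI) auto
qed

lemma uc_conv_interleave_limit:
  assumes "uc_conv F f"
  shows "uc_conv (\<lambda>n. if even n then F (n div 2) else f) f"
  unfolding uc_conv_def
proof (intro allI impI uniform_limitI)
  fix K :: "complex set" and e :: real
  assume "compact K \<and> K \<subseteq> ball 0 1" "e > 0"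
  then have "\<forall>\<^sub>F n in sequentially. \<forall>x\<in>K. dist (F n x) (f x) < e"
    using assms unfolding uc_conv_def by (blast dest: uniform_limitD)
  then obtain N where N: "\<And>n. n \<ge> N \<Longrightarrow> \<forall>x\<in>K. dist (F n x) (f x) < e"
    unfolding eventually_sequentially by blast
  have "\<forall>x\<in>K. dist ((if even n then F (n div 2) else f) x) (f x) < e" if "n \<ge> 2 * N" for n
    using N[of "n div 2"] that \<open>e > 0\<close> by auto
  then show "\<forall>\<^sub>F n in sequentially. \<forall>x\<in>K. dist ((if even n then F (n div 2) else f) x) (f x) < e"
    unfolding eventually_sequentially by blast
qed

lemma intrinsic_HD: "intrinsic T \<Longrightarrow> f \<in> HD \<Longrightarrow> T f \<in> HD"
  unfolding intrinsic_def by blast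

lemma intrinsic_cmult: "intrinsic T \<Longrightarrow> f \<in> HD \<Longrightarrow> T (\<lambda>z. c * f z) = (\<lambda>z. c * T f z)"
  unfolding intrinsic_def by blast

lemma intrinsic_zero: "intrinsic T \<Longrightarrow> T (\<lambda>z. 0) = (\<lambda>z. 0)"
  using intrinsic_cmult[OF _ HD_const_0, of T 0] by simp

text \<open>The definition only provides some limit of the images; interleaving the sequence with
  its limit forces that limit to be the image of the limit.\<close>
lemma intrinsic_uc_conv:
  assumes T: "intrinsic T" and F: "\<And>n. F n \<in> HD" and f: "f \<in> HD" and lim: "uc_conv F f"
  shows "uc_conv (\<lambda>n. T (F n)) (T f)"
proof -
  define G where "G = (\<lambda>n. if even n then F (n div 2) else f)"
  have "\<forall>n. G n \<in> HD" using F f by (simp add: G_def)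
  then have "\<exists>g\<in>HD. uc_conv (\<lambda>n. T (G n)) g"
    using T f uc_conv_interleave_limit[OF lim, folded G_def] unfolding intrinsic_def by blast
  then obtain g where g: "g \<in> HD" and lim_g: "uc_conv (\<lambda>n. T (G n)) g"
    by blast
  have odd: "T (G (Suc (2 * n))) = T f" and even: "T (G (2 * n)) = T (F n)" for n
    by (simp_all add: G_def)
  have mono: "strict_mono (\<lambda>n::nat. 2 * n + 1)" "strict_mono (\<lambda>n::nat. 2 * n)"
    by (auto intro: strict_monoI)
  have "g z = T f z" for z
  proof (cases "z \<in> ball 0 1")
    case True
    then show ?thesis
      using uc_conv_pointwise[OF uc_conv_subseq[OF lim_g mono(1)] True]
      by (simp add: comp_def odd LIMSEQ_const_iff)
  next
    case False
    then show ?thesis using HD_outside[OF g] HD_outside[OF intrinsic_HD[OF T f]] by simp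
  qed
  then have "g = T f" ..
  then show ?thesis
    using uc_conv_subseq[OF lim_g mono(2)] by (simp add: comp_def even)
qed

lemma compact_subset_ball_in_cball:
  fixes K :: "'a::real_normed_vector set"
  assumes K: "compact K" "K \<subseteq> ball 0 r"
  obtains s where "s < r" "K \<subseteq> cball 0 s"
proof (cases "K = {}")
  case True
  then show ?thesis using that[of "r - 1"] by simp
next
  case False
  then obtain x where x: "x \<in> K" and max: "\<And>y. y \<in> K \<Longrightarrow> norm y \<le> norm x"
    using continuous_attains_sup[OF K(1) False continuous_on_norm_id] by blast
  have "norm x < r" using x K(2) by auto
  moreover have "K \<subseteq> cball 0 (norm x)" using max by auto
  ultimately show ?thesis by (rule that)
qed

lemma uc_conv_dil:
  assumes f: "f \<in> HD"
  shows "uc_conv (\<lambda>n. dil (real n / real (Suc n)) f) f"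
  unfolding uc_conv_def
proof (intro allI impI uniform_limitI)
  fix K :: "complex set" and e :: real
  assume K: "compact K \<and> K \<subseteq> ball 0 1" and e: "e > 0"
  obtain s where s: "s < 1" "K \<subseteq> cball 0 s"
    using K compact_subset_ball_in_cball[of K 1] by blast
  have "continuous_on (cball 0 s) f"
    by (rule continuous_on_subset[OF holomorphic_on_imp_continuous_on[OF HD_holomorphic[OF f]]])
      (use s(1) in auto)
  then have "uniformly_continuous_on (cball 0 s) f"
    by (rule compact_uniformly_continuous) simp
  then obtain d where d: "d > 0"
    and close: "\<And>x x'. x \<in> cball 0 s \<Longrightarrow> x' \<in> cball 0 s \<Longrightarrow> dist x' x < d \<Longrightarrow> dist (f x') (f x) < e"
    using e unfolding uniformly_continuous_on_def by metis
  obtain N :: nat where N: "1 / d < real N" using reals_Archimedean2 by blast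
  have "dist (dil (real n / real (Suc n)) f x) (f x) < e" if n: "N \<le> n" and x: "x \<in> K" for n x
  proof -
    define r where "r = real n / real (Suc n)"
    have r: "0 \<le> r" "r \<le> 1" "1 - r = 1 / real (Suc n)" by (auto simp: r_def field_simps)
    have x_le: "cmod x \<le> s" "cmod x < 1" using s(2) x K by auto
    have "dist (of_real r * x) x = cmod (of_real (1 - r) * x)"
      by (simp add: dist_norm norm_minus_commute algebra_simps)
    also have "\<dots> = (1 - r) * cmod x"
      using r(2) by (simp only: norm_mult norm_of_real abs_of_nonneg diff_ge_0_iff_ge)
    also have "\<dots> \<le> 1 - r"
      using r x_le by (intro mult_left_le) auto
    also have "\<dots> = 1 / real (Suc n)"
      by (rule r(3))
    also have "\<dots> < d"
    proof -
      have "1 / d < real (Suc n)" using N n by simp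
      then show ?thesis using d by (simp add: field_simps)
    qed
    finally have "dist (of_real r * x) x < d" .
    moreover have "cmod (of_real r * x) \<le> s"
      using r x_le mult_left_le_one_le[of "cmod x" r] by (simp add: norm_mult)
    ultimately have "dist (f (of_real r * x)) (f x) < e"
      using close x_le by simp
    then show ?thesis using x_le by (simp add: dil_def r_def)
  qed
  then show "\<forall>\<^sub>F n in sequentially. \<forall>x\<in>K. dist (dil (real n / real (Suc n)) f x) (f x) < e"
    unfolding eventually_sequentially by blast
qed

section \<open>The weighted Bloch space\<close>

lemma typical_weight_pos: "typical_weight v \<Longrightarrow> z \<in> ball 0 1 \<Longrightarrow> 0 < v z"
  unfolding typical_weight_def by blast

lemma typical_weight_le_1: "typical_weight v \<Longrightarrow> z \<in> ball 0 1 \<Longrightarrow> v z \<le> 1"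
  unfolding typical_weight_def by blast

lemma Bv0_iff: "f \<in> Bv0 v \<longleftrightarrow> f \<in> Bv v \<and> vanishes_at_circle (\<lambda>z. v z * cmod (deriv f z))"
  unfolding Bv0_def vanishes_at_circle_def by blast

lemma Bv_HD: "f \<in> Bv v \<Longrightarrow> f \<in> HD"
  unfolding Bv_def by blast

lemma Bv_norm_ge:
  assumes "h \<in> Bv v" "z \<in> ball 0 1"
  shows "cmod (h 0) + v z * cmod (deriv h z) \<le> Bv_norm v h"
proof -
  have "bdd_above ((\<lambda>z. v z * cmod (deriv h z)) ` ball 0 1)"
    using assms(1) by (simp add: Bv_def)
  then have "v z * cmod (deriv h z) \<le> (SUP z\<in>ball 0 1. v z * cmod (deriv h z))"
    using assms(2) by (rule cSUP_upper2) simp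
  then show ?thesis by (simp add: Bv_norm_def)
qed

lemma Bv_norm_ge_deriv: "h \<in> Bv v \<Longrightarrow> z \<in> ball 0 1 \<Longrightarrow> v z * cmod (deriv h z) \<le> Bv_norm v h"
  using Bv_norm_ge[of h v z] norm_ge_zero[of "h 0"] by linarith

lemma Bv_norm_ge_value0: "typical_weight v \<Longrightarrow> h \<in> Bv v \<Longrightarrow> cmod (h 0) \<le> Bv_norm v h"
proof -
  assume "typical_weight v" "h \<in> Bv v"
  then have "0 \<le> v 0 * cmod (deriv h 0)" "cmod (h 0) + v 0 * cmod (deriv h 0) \<le> Bv_norm v h"
    using Bv_norm_ge[of h v 0] typical_weight_pos[of v 0] by simp_all
  then show ?thesis by linarith
qed

lemma Bv_norm_nonneg: "typical_weight v \<Longrightarrow> h \<in> Bv v \<Longrightarrow> 0 \<le> Bv_norm v h"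
  using Bv_norm_ge_value0 norm_ge_zero order_trans by blast

lemma Bv_norm_le:
  assumes "\<And>z. z \<in> ball 0 1 \<Longrightarrow> v z * cmod (deriv h z) \<le> B"
  shows "Bv_norm v h \<le> cmod (h 0) + B"
proof -
  have "(SUP z\<in>ball 0 1. v z * cmod (deriv h z)) \<le> B"
    by (rule cSUP_least) (auto intro: assms)
  then show ?thesis by (simp add: Bv_norm_def)
qed

lemma Bv_diff:
  assumes v: "typical_weight v" and a: "a \<in> Bv v" and b: "b \<in> Bv v"
  shows "(\<lambda>z. a z - b z) \<in> Bv v"
proof -
  have bound: "v z * cmod (deriv (\<lambda>w. a w - b w) z) \<le> Bv_norm v a + Bv_norm v b"
    if z: "z \<in> ball 0 1" for z
  proof -
    have "v z * cmod (deriv (\<lambda>w. a w - b w) z) \<le> v z * cmod (deriv a z) + v z * cmod (deriv b z)"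
      using typical_weight_pos[OF v z] norm_triangle_ineq4[of "deriv a z" "deriv b z"]
      by (simp add: deriv_HD_diff[OF Bv_HD[OF a] Bv_HD[OF b] z] flip: distrib_left)
    then show ?thesis
      using Bv_norm_ge_deriv[OF a z] Bv_norm_ge_deriv[OF b z] by linarith
  qed
  have "bdd_above ((\<lambda>z. v z * cmod (deriv (\<lambda>w. a w - b w) z)) ` ball 0 1)"
    using bound by (rule bdd_aboveI2)
  with HD_diff[OF Bv_HD[OF a] Bv_HD[OF b]] show ?thesis
    unfolding Bv_def by blast
qed

lemma Bv_norm_diff_ge_deriv:
  assumes "typical_weight v" "a \<in> Bv v" "b \<in> Bv v" "z \<in> ball 0 1"
  shows "v z * cmod (deriv a z - deriv b z) \<le> Bv_norm v (\<lambda>w. a w - b w)"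
  using Bv_norm_ge_deriv[OF Bv_diff[OF assms(1-3)] assms(4)]
  by (simp add: deriv_HD_diff[OF Bv_HD[OF assms(2)] Bv_HD[OF assms(3)] assms(4)])

lemma Bv_norm_diff_ge_value0:
  "typical_weight v \<Longrightarrow> a \<in> Bv v \<Longrightarrow> b \<in> Bv v \<Longrightarrow> cmod (a 0 - b 0) \<le> Bv_norm v (\<lambda>w. a w - b w)"
  using Bv_norm_ge_value0[OF _ Bv_diff] by fastforce

lemma weighted_norm_triangle:
  "0 \<le> c \<Longrightarrow> c * cmod x \<le> c * cmod y + c * cmod (x - y)"
  using mult_left_mono[OF norm_triangle_sub[of x y]] by (simp add: distrib_left)

lemma Bv_limit_eq_uc_limit:
  assumes v: "typical_weight v" and H: "\<And>n. H n \<in> Bv v" and g: "g \<in> Bv v"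
    and lim: "(\<lambda>n. Bv_norm v (\<lambda>w. H n w - g w)) \<longlonglongrightarrow> 0"
    and h: "h \<in> HD" and uc: "uc_conv H h"
  shows "g = h"
proof (rule HD_eqI_deriv[OF Bv_HD[OF g] h])
  show "deriv g z = deriv h z" if z: "z \<in> ball 0 1" for z
  proof -
    have "cmod (deriv (H n) z - deriv g z) \<le> Bv_norm v (\<lambda>w. H n w - g w) / v z" for n
      using Bv_norm_diff_ge_deriv[OF v H g z] typical_weight_pos[OF v z]
      by (simp add: field_simps mult.commute)
    then have "(\<lambda>n. deriv (H n) z - deriv g z) \<longlonglongrightarrow> 0"
      by (intro Lim_null_comparison[OF always_eventually tendsto_divide_zero[OF lim]]) auto
    then have "(\<lambda>n. deriv (H n) z) \<longlonglongrightarrow> deriv g z"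
      by (rule LIM_zero_cancel)
    then show ?thesis
      using uc_conv_deriv[OF Bv_HD[OF H] uc z] LIMSEQ_unique by blast
  qed
  have "(\<lambda>n. H n 0 - g 0) \<longlonglongrightarrow> 0"
    using Bv_norm_diff_ge_value0[OF v H g]
    by (intro Lim_null_comparison[OF always_eventually lim]) auto
  then have "(\<lambda>n. H n 0) \<longlonglongrightarrow> g 0"
    by (rule LIM_zero_cancel)
  then show "g 0 = h 0"
    using uc_conv_pointwise[OF uc, of 0] LIMSEQ_unique by auto
qed

lemma Bv0_closed:
  assumes v: "typical_weight v" and H: "\<And>n. H n \<in> Bv0 v" and g: "g \<in> Bv v"
    and lim: "(\<lambda>n. Bv_norm v (\<lambda>w. H n w - g w)) \<longlonglongrightarrow> 0"
  shows "g \<in> Bv0 v"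
  unfolding Bv0_iff
proof (intro conjI g vanishes_at_circle_approx)
  fix e :: real assume "e > 0"
  then have "\<forall>\<^sub>F n in sequentially. Bv_norm v (\<lambda>w. H n w - g w) < e"
    by (rule order_tendstoD(2)[OF lim])
  then obtain n where n: "Bv_norm v (\<lambda>w. H n w - g w) < e"
    unfolding eventually_sequentially by blast
  have Hn: "H n \<in> Bv v" "vanishes_at_circle (\<lambda>z. v z * cmod (deriv (H n) z))"
    using H[of n] by (auto simp: Bv0_iff)
  have "v z * cmod (deriv g z) \<le> v z * cmod (deriv (H n) z) + e" if z: "z \<in> ball 0 1" for z
    using weighted_norm_triangle[of "v z" "deriv g z" "deriv (H n) z"] typical_weight_pos[OF v z]
      Bv_norm_diff_ge_deriv[OF v Hn(1) g z] n
    by (simp add: norm_minus_commute)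
  then show "\<exists>u. vanishes_at_circle u \<and> (\<forall>z\<in>ball 0 1. v z * cmod (deriv g z) \<le> u z + e)"
    using Hn(2) by blast
qed

lemma Bv_tendsto_Bv0_uniformly_small:
  assumes v: "typical_weight v" and H: "\<And>n. H n \<in> Bv v" and g: "g \<in> Bv0 v"
    and lim: "(\<lambda>n. Bv_norm v (\<lambda>w. H n w - g w)) \<longlonglongrightarrow> 0" and e: "e > 0"
  obtains N \<rho> where "\<rho> < 1"
    "\<And>n z. n \<ge> N \<Longrightarrow> \<rho> < cmod z \<Longrightarrow> cmod z < 1 \<Longrightarrow> v z * cmod (deriv (H n) z) < e"
proof -
  have gB: "g \<in> Bv v" and "vanishes_at_circle (\<lambda>z. v z * cmod (deriv g z))"
    using g by (auto simp: Bv0_iff)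
  then obtain \<rho> where "\<rho> < 1" and \<rho>: "\<And>z. \<rho> < cmod z \<Longrightarrow> cmod z < 1 \<Longrightarrow> v z * cmod (deriv g z) < e / 2"
    using e by (auto elim: vanishes_at_circleE[of _ "e / 2"])
  have "\<forall>\<^sub>F n in sequentially. Bv_norm v (\<lambda>w. H n w - g w) < e / 2"
    using e by (intro order_tendstoD(2)[OF lim]) simp
  then obtain N where N: "\<And>n. n \<ge> N \<Longrightarrow> Bv_norm v (\<lambda>w. H n w - g w) < e / 2"
    unfolding eventually_sequentially by blast
  have "v z * cmod (deriv (H n) z) < e" if "n \<ge> N" "\<rho> < cmod z" "cmod z < 1" for n z
  proof -
    have z: "z \<in> ball 0 1" using that by simp
    show ?thesis
      using weighted_norm_triangle[of "v z" "deriv (H n) z" "deriv g z"] typical_weight_pos[OF v z]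
        Bv_norm_diff_ge_deriv[OF v H[of n] gB z] N[OF that(1)] \<rho>[OF that(2,3)]
      by linarith
  qed
  with \<open>\<rho> < 1\<close> show ?thesis using that by blast
qed

lemma Bv_norm_le_inner_outer:
  assumes v: "typical_weight v" and D: "D \<in> HD" and \<rho>: "0 \<le> \<rho>" and \<delta>: "0 < \<delta>"
    and disc: "cball (0::complex) (\<rho> + \<delta>) \<subseteq> ball 0 1"
    and inner: "\<And>w. cmod w \<le> \<rho> + \<delta> \<Longrightarrow> cmod (D w) \<le> \<eta>"
    and outer: "\<And>z. \<rho> < cmod z \<Longrightarrow> cmod z < 1 \<Longrightarrow> v z * cmod (deriv D z) \<le> B"
    and "\<eta> / \<delta> \<le> B"
  shows "Bv_norm v D \<le> \<eta> + B"
proof -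
  have "v z * cmod (deriv D z) \<le> B" if z: "z \<in> ball 0 1" for z
  proof (cases "cmod z \<le> \<rho>")
    case True
    have "cmod (deriv D z) \<le> \<eta> / \<delta>"
      by (rule norm_deriv_le_Cauchy_concentric[OF HD_holomorphic[OF D] disc \<delta> True]) (rule inner)
    moreover have "v z * cmod (deriv D z) \<le> cmod (deriv D z)"
      using typical_weight_pos[OF v z] typical_weight_le_1[OF v z] by (simp add: mult_left_le_one_le)
    ultimately show ?thesis using \<open>\<eta> / \<delta> \<le> B\<close> by linarith
  next
    case False
    then show ?thesis using outer z by simp
  qed
  then have "Bv_norm v D \<le> cmod (D 0) + B" by (rule Bv_norm_le)
  moreover have "cmod (D 0) \<le> \<eta>" using inner \<rho> \<delta> by simp
  ultimately show ?thesis by linarith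
qed

lemma Bv_tendsto_if_uc_conv:
  assumes v: "typical_weight v" and H: "\<And>n. H n \<in> Bv v" and h: "h \<in> Bv v"
    and uc: "uc_conv H h"
    and small: "\<And>e. e > 0 \<Longrightarrow> \<exists>\<rho><1. \<forall>n z. \<rho> < cmod z \<and> cmod z < 1 \<longrightarrow>
                    v z * cmod (deriv (H n) z - deriv h z) < e"
  shows "(\<lambda>n. Bv_norm v (\<lambda>w. H n w - h w)) \<longlonglongrightarrow> 0"
proof (rule LIMSEQ_I)
  fix e :: real assume e: "e > 0"
  obtain \<rho>0 where "\<rho>0 < 1" and \<rho>0: "\<And>n z. \<rho>0 < cmod z \<Longrightarrow> cmod z < 1 \<Longrightarrow>
      v z * cmod (deriv (H n) z - deriv h z) < e / 2"
    using small[of "e / 2"] e by auto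
  define \<rho> where "\<rho> = max \<rho>0 0"
  define \<delta> where "\<delta> = (1 - \<rho>) / 2"
  have \<rho>: "0 \<le> \<rho>" "\<rho> < 1" "\<rho>0 \<le> \<rho>" using \<open>\<rho>0 < 1\<close> by (auto simp: \<rho>_def)
  have \<delta>: "0 < \<delta>" "\<delta> \<le> 1 / 2" "\<rho> + \<delta> < 1"
    using \<rho>(1,2) by (simp_all add: \<delta>_def field_simps)
  have disc: "cball 0 (\<rho> + \<delta>) \<subseteq> ball 0 1" using \<delta>(3) by auto
  then have "uniform_limit (cball 0 (\<rho> + \<delta>)) H h sequentially"
    using uc compact_cball unfolding uc_conv_def by blast
  moreover have "e * \<delta> / 4 > 0" using e \<delta> by simp
  ultimately have "\<forall>\<^sub>F n in sequentially. \<forall>w\<in>cball 0 (\<rho> + \<delta>). dist (H n w) (h w) < e * \<delta> / 4"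
    by (rule uniform_limitD)
  then obtain N where N: "\<And>n w. n \<ge> N \<Longrightarrow> w \<in> cball 0 (\<rho> + \<delta>) \<Longrightarrow>
      cmod (H n w - h w) < e * \<delta> / 4"
    unfolding eventually_sequentially dist_norm by blast
  have "norm (Bv_norm v (\<lambda>w. H n w - h w)) < e" if n: "n \<ge> N" for n
  proof -
    have "Bv_norm v (\<lambda>w. H n w - h w) \<le> e * \<delta> / 4 + e / 2"
    proof (rule Bv_norm_le_inner_outer[OF v HD_diff[OF Bv_HD[OF H] Bv_HD[OF h]] \<rho>(1) \<delta>(1) disc])
      show "cmod (H n w - h w) \<le> e * \<delta> / 4" if "cmod w \<le> \<rho> + \<delta>" for w
        using N[OF n, of w] that by simp
      show "v z * cmod (deriv (\<lambda>w. H n w - h w) z) \<le> e / 2" if "\<rho> < cmod z" "cmod z < 1" for z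
        using \<rho>0[of z n] \<rho>(3) that
        by (simp add: deriv_HD_diff[OF Bv_HD[OF H] Bv_HD[OF h]])
      show "e * \<delta> / 4 / \<delta> \<le> e / 2" using e \<delta>(1) by simp
    qed
    moreover have "e * \<delta> / 4 \<le> e / 8" using mult_left_mono[OF \<delta>(2), of e] e by simp
    ultimately have "Bv_norm v (\<lambda>w. H n w - h w) < e" using e by linarith
    moreover have "0 \<le> Bv_norm v (\<lambda>w. H n w - h w)"
      by (rule Bv_norm_nonneg[OF v Bv_diff[OF v H h]])
    ultimately show ?thesis by simp
  qed
  then show "\<exists>N. \<forall>n\<ge>N. norm (Bv_norm v (\<lambda>w. H n w - h w) - 0) < e" by auto
qed

section \<open>Operators from an initial space into \<open>B\<^sub>v\<close>\<close>

lemma compact_opI: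
  assumes "\<And>f. f \<in> X \<Longrightarrow> T f \<in> Y"
    and "\<And>F. (\<And>n::nat. F n \<in> X \<and> nX (F n) \<le> 1) \<Longrightarrow> \<exists>(\<phi>::nat \<Rightarrow> nat) g. strict_mono \<phi> \<and> g \<in> Y \<and>
           (\<lambda>n. Bv_norm v (\<lambda>z. T (F (\<phi> n)) z - g z)) \<longlonglongrightarrow> 0"
  shows "compact_op T X nX v Y"
proof -
  have "\<forall>F. (\<forall>n. F n \<in> X \<and> nX (F n) \<le> 1) \<longrightarrow> (\<exists>(\<phi>::nat \<Rightarrow> nat) g. strict_mono \<phi> \<and> g \<in> Y \<and>
           (\<lambda>n. Bv_norm v (\<lambda>z. T (F (\<phi> n)) z - g z)) \<longlonglongrightarrow> 0)"
  proof (intro allI impI)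
    fix F :: "nat \<Rightarrow> hfun" assume F: "\<forall>n. F n \<in> X \<and> nX (F n) \<le> 1"
    show "\<exists>(\<phi>::nat \<Rightarrow> nat) g. strict_mono \<phi> \<and> g \<in> Y \<and> (\<lambda>n. Bv_norm v (\<lambda>z. T (F (\<phi> n)) z - g z)) \<longlonglongrightarrow> 0"
      by (rule assms(2)) (use F in blast)
  qed
  then show ?thesis using assms(1) unfolding compact_op_def by blast
qed

lemma compact_opE:
  assumes "compact_op T X nX v Y" "\<And>n::nat. F n \<in> X \<and> nX (F n) \<le> 1"
  obtains \<phi> :: "nat \<Rightarrow> nat" and g where "strict_mono \<phi>" "g \<in> Y" "(\<lambda>n. Bv_norm v (\<lambda>z. T (F (\<phi> n)) z - g z)) \<longlonglongrightarrow> 0"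
proof -
  have "\<forall>n. F n \<in> X \<and> nX (F n) \<le> 1" using assms(2) ..
  then show ?thesis using assms(1) that unfolding compact_op_def by blast
qed

lemma compact_op_mem: "compact_op T X nX v Y \<Longrightarrow> f \<in> X \<Longrightarrow> T f \<in> Y"
  unfolding compact_op_def by blast

lemma compact_op_Bv_if_Bv0:
  assumes compact: "compact_op T X nX v (Bv0 v)"
  shows "compact_op T X nX v (Bv v)"
proof (rule compact_opI)
  show "T f \<in> Bv v" if "f \<in> X" for f
    using compact_op_mem[OF compact that] by (simp add: Bv0_iff)
  fix F :: "nat \<Rightarrow> hfun" assume "\<And>n. F n \<in> X \<and> nX (F n) \<le> 1"
  then obtain \<phi> :: "nat \<Rightarrow> nat" and g where "strict_mono \<phi>" "g \<in> Bv0 v" "(\<lambda>n. Bv_norm v (\<lambda>z. T (F (\<phi> n)) z - g z)) \<longlonglongrightarrow> 0"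
    by (rule compact_opE[OF compact])
  then show "\<exists>(\<phi>::nat \<Rightarrow> nat) g. strict_mono \<phi> \<and> g \<in> Bv v \<and> (\<lambda>n. Bv_norm v (\<lambda>z. T (F (\<phi> n)) z - g z)) \<longlonglongrightarrow> 0"
    by (auto simp: Bv0_iff)
qed

locale bounded_intrinsic_operator =
  fixes v :: "complex \<Rightarrow> real" and X :: "hfun set" and nX :: "hfun \<Rightarrow> real" and T :: "hfun \<Rightarrow> hfun"
  assumes weight: "typical_weight v"
    and initial: "initial_space X nX"
    and intrinsic: "intrinsic T"
    and maps_Bv: "\<forall>f\<in>X. T f \<in> Bv v"
    and bounded: "\<exists>M. \<forall>f\<in>X. Bv_norm v (T f) \<le> M * nX f"
begin

lemma X_banach: "banach_subspace X nX"
  using initial unfolding initial_space_def by blast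

lemma X_HD: "f \<in> X \<Longrightarrow> f \<in> HD"
  using X_banach unfolding banach_subspace_def by blast

lemma X_zero: "(\<lambda>z. 0) \<in> X"
  using X_banach unfolding banach_subspace_def by blast

lemma X_cmult: "f \<in> X \<Longrightarrow> (\<lambda>z. c * f z) \<in> X"
  using X_banach unfolding banach_subspace_def by blast

lemma X_norm_nonneg: "f \<in> X \<Longrightarrow> 0 \<le> nX f"
  using X_banach unfolding banach_subspace_def by blast

lemma X_norm_eq_0: "f \<in> X \<Longrightarrow> nX f = 0 \<longleftrightarrow> f = (\<lambda>z. 0)"
  using X_banach unfolding banach_subspace_def by blast

lemma X_norm_cmult: "f \<in> X \<Longrightarrow> nX (\<lambda>z. c * f z) = cmod c * nX f"
  using X_banach unfolding banach_subspace_def by blast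

lemma X_unit_ball_uc_subseq:
  assumes "\<And>n::nat. F n \<in> X \<and> nX (F n) \<le> 1"
  obtains \<phi> :: "nat \<Rightarrow> nat" and g where "strict_mono \<phi>" "g \<in> X" "uc_conv (F \<circ> \<phi>) g"
proof -
  have "\<forall>n. F n \<in> X \<and> nX (F n) \<le> 1" using assms ..
  then show ?thesis using initial that unfolding initial_space_def by blast
qed

lemma X_divide:
  assumes "f \<in> X" "0 < K"
  obtains f1 where "f1 \<in> X" "nX f1 = nX f / K" "f = (\<lambda>z. of_real K * f1 z)"
proof
  show "(\<lambda>z. of_real (1 / K) * f z) \<in> X" using X_cmult[OF assms(1)] .
  show "nX (\<lambda>z. of_real (1 / K) * f z) = nX f / K"
    by (subst X_norm_cmult[OF assms(1)]) (use assms in \<open>simp add: norm_divide\<close>)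
  show "f = (\<lambda>z. of_real K * (of_real (1 / K) * f z))"
    using assms(2) by (simp flip: of_real_mult)
qed

lemma T_cmult: "f \<in> X \<Longrightarrow> T (\<lambda>z. c * f z) = (\<lambda>z. c * T f z)"
  using intrinsic_cmult[OF intrinsic X_HD] .

lemma adj_Kz_bdd_above:
  assumes z: "z \<in> ball 0 1"
  shows "bdd_above ((\<lambda>f. cmod (deriv (T f) z)) ` {f\<in>X. nX f \<le> 1})"
proof -
  obtain M where M: "\<And>f. f \<in> X \<Longrightarrow> Bv_norm v (T f) \<le> M * nX f" using bounded by blast
  have bound: "cmod (deriv (T f) z) \<le> \<bar>M\<bar> / v z" if f: "f \<in> X" "nX f \<le> 1" for f
  proof -
    have "T f \<in> Bv v" using maps_Bv f(1) by blast
    then have "v z * cmod (deriv (T f) z) \<le> Bv_norm v (T f)"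
      by (rule Bv_norm_ge_deriv[OF _ z])
    also have "\<dots> \<le> M * nX f" using M[OF f(1)] .
    also have "\<dots> \<le> \<bar>M\<bar>"
      using X_norm_nonneg[OF f(1)] f(2) abs_ge_self[of M] mult_left_le[of "nX f" "\<bar>M\<bar>"]
        mult_right_mono[OF abs_ge_self[of M], of "nX f"] by linarith
    finally show ?thesis using typical_weight_pos[OF weight z] by (simp add: field_simps)
  qed
  show ?thesis
    by (rule bdd_aboveI2) (use bound in blast)
qed

lemma deriv_le_adj_Kz_norm:
  "z \<in> ball 0 1 \<Longrightarrow> f \<in> X \<Longrightarrow> nX f \<le> 1 \<Longrightarrow> cmod (deriv (T f) z) \<le> adj_Kz_norm T X nX z"
  unfolding adj_Kz_norm_def by (rule cSUP_upper[OF _ adj_Kz_bdd_above]) auto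

lemma adj_Kz_norm_nonneg: "z \<in> ball 0 1 \<Longrightarrow> 0 \<le> adj_Kz_norm T X nX z"
proof -
  assume "z \<in> ball 0 1"
  then have "cmod (deriv (T (\<lambda>z. 0)) z) \<le> adj_Kz_norm T X nX z"
    using deriv_le_adj_Kz_norm[OF _ X_zero] X_norm_eq_0[OF X_zero] by simp
  then show ?thesis using norm_ge_zero order_trans by blast
qed

lemma deriv_le_adj_Kz_norm_mult:
  assumes z: "z \<in> ball 0 1" and f: "f \<in> X"
  shows "cmod (deriv (T f) z) \<le> adj_Kz_norm T X nX z * nX f"
proof (cases "nX f = 0")
  case True
  then show ?thesis using X_norm_eq_0[OF f] intrinsic_zero[OF intrinsic] by simp
next
  case False
  define K where "K = nX f"
  have K: "0 < K" using False X_norm_nonneg[OF f] by (simp add: K_def)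
  then obtain f1 where f1: "f1 \<in> X" "nX f1 = nX f / K" and f_eq: "f = (\<lambda>z. of_real K * f1 z)"
    using X_divide[OF f] by blast
  from f1(2) K have "nX f1 = 1" by (simp add: K_def)
  have "deriv (T f) z = of_real K * deriv (T f1) z"
    unfolding f_eq T_cmult[OF f1(1)] using deriv_HD_cmult[OF intrinsic_HD[OF intrinsic X_HD[OF f1(1)]] z] .
  then show ?thesis
    using deriv_le_adj_Kz_norm[OF z f1(1)] \<open>nX f1 = 1\<close> K by (simp add: norm_mult mult.commute K_def)
qed

lemma exists_unit_deriv_gt:
  assumes z: "z \<in> ball 0 1" and c: "c < v z * adj_Kz_norm T X nX z"
  obtains f where "f \<in> X" "nX f \<le> 1" "c < v z * cmod (deriv (T f) z)"
proof -
  have vz: "0 < v z" using typical_weight_pos[OF weight z] .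
  have "(\<lambda>z. 0) \<in> {f\<in>X. nX f \<le> 1}" using X_zero X_norm_eq_0[OF X_zero] by simp
  then have ne: "{f\<in>X. nX f \<le> 1} \<noteq> {}" by blast
  have "c / v z < (SUP f\<in>{f\<in>X. nX f \<le> 1}. cmod (deriv (T f) z))"
    using c unfolding adj_Kz_norm_def pos_divide_less_eq[OF vz] by (simp add: mult.commute)
  then have "\<exists>f\<in>{f\<in>X. nX f \<le> 1}. c / v z < cmod (deriv (T f) z)"
    unfolding less_cSUP_iff[OF ne adj_Kz_bdd_above[OF z]] .
  then obtain f where "f \<in> X" "nX f \<le> 1" "c / v z < cmod (deriv (T f) z)" by blast
  then show ?thesis
    using that unfolding pos_divide_less_eq[OF vz] by (simp add: mult.commute)
qed

lemma T_in_Bv0_if_compact_Bv_dilations: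
  assumes compact: "compact_op T X nX v (Bv v)" and f: "f \<in> X"
    and dil_X: "\<And>n. dil (real n / real (Suc n)) f \<in> X \<and> nX (dil (real n / real (Suc n)) f) \<le> 1"
    and dil_Bv0: "\<And>n. T (dil (real n / real (Suc n)) f) \<in> Bv0 v"
  shows "T f \<in> Bv0 v"
proof -
  define F where "F = (\<lambda>n. dil (real n / real (Suc n)) f)"
  obtain \<phi> :: "nat \<Rightarrow> nat" and g where \<phi>: "strict_mono \<phi>" and g: "g \<in> Bv v"
    and lim: "(\<lambda>n. Bv_norm v (\<lambda>z. T (F (\<phi> n)) z - g z)) \<longlonglongrightarrow> 0"
    using dil_X unfolding F_def by (rule compact_opE[OF compact])
  have F_Bv0: "T (F (\<phi> n)) \<in> Bv0 v" for n
    unfolding F_def by (rule dil_Bv0)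
  have "uc_conv (\<lambda>n. F (\<phi> n)) f"
    using uc_conv_subseq[OF uc_conv_dil[OF X_HD[OF f]] \<phi>] by (simp add: F_def comp_def)
  then have "uc_conv (\<lambda>n. T (F (\<phi> n))) (T f)"
    using dil_X X_HD f by (intro intrinsic_uc_conv[OF intrinsic]) (auto simp: F_def)
  then have "g = T f"
    using F_Bv0 Bv0_iff X_HD f intrinsic_HD[OF intrinsic]
    by (intro Bv_limit_eq_uc_limit[OF weight _ g lim]) auto
  then show ?thesis
    using Bv0_closed[OF weight F_Bv0 g lim] by simp
qed

text \<open>Rescale \<open>f\<close> so that all its dilations lie in the unit ball of \<open>X\<close>.\<close>
lemma T_in_Bv0_if_compact_Bv:
  assumes dil_X: "\<And>f r. f \<in> X \<Longrightarrow> 0 \<le> r \<Longrightarrow> r < 1 \<Longrightarrow> dil r f \<in> X \<and> nX (dil r f) \<le> C * nX f"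
    and dil_Bv0: "\<And>f r. f \<in> X \<Longrightarrow> 0 \<le> r \<Longrightarrow> r < 1 \<Longrightarrow> T (dil r f) \<in> Bv0 v"
    and compact: "compact_op T X nX v (Bv v)" and f: "f \<in> X"
  shows "T f \<in> Bv0 v"
proof -
  define K where "K = 1 + \<bar>C\<bar> * nX f"
  have K: "0 < K" using X_norm_nonneg[OF f] by (simp add: K_def add_pos_nonneg)
  then obtain f1 where f1: "f1 \<in> X" "nX f1 = nX f / K" and f_eq: "f = (\<lambda>z. of_real K * f1 z)"
    using X_divide[OF f] by blast
  have "C * nX f1 \<le> \<bar>C\<bar> * nX f1"
    using X_norm_nonneg[OF f1(1)] by (rule mult_right_mono[OF abs_ge_self])
  also have "\<dots> = \<bar>C\<bar> * nX f / K" by (simp add: f1(2))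
  also have "\<dots> \<le> 1" using K by (simp add: K_def)
  finally have C1: "C * nX f1 \<le> 1" .
  have r: "0 \<le> real n / real (Suc n)" "real n / real (Suc n) < 1" for n :: nat
    by simp_all
  have "T f1 \<in> Bv0 v"
  proof (rule T_in_Bv0_if_compact_Bv_dilations[OF compact f1(1)])
    show "dil (real n / real (Suc n)) f1 \<in> X \<and> nX (dil (real n / real (Suc n)) f1) \<le> 1" for n
      using dil_X[OF f1(1) r[of n]] C1 by linarith
    show "T (dil (real n / real (Suc n)) f1) \<in> Bv0 v" for n
      using dil_Bv0[OF f1(1) r[of n]] .
  qed
  then have van: "vanishes_at_circle (\<lambda>z. v z * cmod (deriv (T f1) z))"
    by (simp add: Bv0_iff)
  have "v z * cmod (deriv (T f) z) \<le> K * (v z * cmod (deriv (T f1) z))" if z: "z \<in> ball 0 1" for z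
    unfolding f_eq T_cmult[OF f1(1)] deriv_HD_cmult[OF intrinsic_HD[OF intrinsic X_HD[OF f1(1)]] z]
    using K by (simp add: norm_mult)
  then show ?thesis
    using maps_Bv f vanishes_at_circle_le_mult[OF van less_imp_le[OF K]] by (simp add: Bv0_iff)
qed

lemma compact_Bv0_if_compact_Bv:
  assumes dil_X: "\<And>f r. f \<in> X \<Longrightarrow> 0 \<le> r \<Longrightarrow> r < 1 \<Longrightarrow> dil r f \<in> X \<and> nX (dil r f) \<le> C * nX f"
    and dil_Bv0: "\<And>f r. f \<in> X \<Longrightarrow> 0 \<le> r \<Longrightarrow> r < 1 \<Longrightarrow> T (dil r f) \<in> Bv0 v"
    and compact: "compact_op T X nX v (Bv v)"
  shows "compact_op T X nX v (Bv0 v)"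
proof (rule compact_opI)
  have T_Bv0: "T f \<in> Bv0 v" if "f \<in> X" for f
    using T_in_Bv0_if_compact_Bv[OF dil_X dil_Bv0 compact that] .
  then show "T f \<in> Bv0 v" if "f \<in> X" for f using that .
  fix F :: "nat \<Rightarrow> hfun" assume F: "\<And>n. F n \<in> X \<and> nX (F n) \<le> 1"
  then obtain \<phi> :: "nat \<Rightarrow> nat" and g where "strict_mono \<phi>" "g \<in> Bv v"
    and lim: "(\<lambda>n. Bv_norm v (\<lambda>z. T (F (\<phi> n)) z - g z)) \<longlonglongrightarrow> 0"
    by (rule compact_opE[OF compact])
  moreover have "g \<in> Bv0 v"
    using F T_Bv0 by (intro Bv0_closed[OF weight _ \<open>g \<in> Bv v\<close> lim]) blast
  ultimately show "\<exists>(\<phi>::nat \<Rightarrow> nat) g. strict_mono \<phi> \<and> g \<in> Bv0 v \<and>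
      (\<lambda>n. Bv_norm v (\<lambda>z. T (F (\<phi> n)) z - g z)) \<longlonglongrightarrow> 0"
    by blast
qed

lemma not_vanishing_adjoint_witnesses:
  assumes "\<not> vanishes_at_circle (\<lambda>z. v z * adj_Kz_norm T X nX z)"
  obtains e z F where "e > 0"
    "\<And>n. 1 - 1 / real (Suc n) < cmod (z n) \<and> cmod (z n) < 1"
    "\<And>n. F n \<in> X \<and> nX (F n) \<le> 1"
    "\<And>n. e / 2 < v (z n) * cmod (deriv (T (F n)) (z n))"
proof -
  obtain e where e: "e > 0"
    and far: "\<forall>\<rho><1. \<exists>z. \<rho> < cmod z \<and> cmod z < 1 \<and> \<not> v z * adj_Kz_norm T X nX z < e"
    using assms unfolding vanishes_at_circle_def by blast
  have "\<forall>n. \<exists>z. 1 - 1 / real (Suc n) < cmod z \<and> cmod z < 1 \<and> e / 2 < v z * adj_Kz_norm T X nX z"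
  proof
    fix n
    have "1 - 1 / real (Suc n) < 1" by simp
    then obtain w where "1 - 1 / real (Suc n) < cmod w" "cmod w < 1" "\<not> v w * adj_Kz_norm T X nX w < e"
      using far by blast
    then show "\<exists>z. 1 - 1 / real (Suc n) < cmod z \<and> cmod z < 1 \<and> e / 2 < v z * adj_Kz_norm T X nX z"
      using e by (intro exI[of _ w]) auto
  qed
  from choice[OF this] obtain z where z: "\<forall>n. 1 - 1 / real (Suc n) < cmod (z n) \<and> cmod (z n) < 1 \<and>
      e / 2 < v (z n) * adj_Kz_norm T X nX (z n)"
    by blast
  have "\<forall>n. \<exists>f. f \<in> X \<and> nX f \<le> 1 \<and> e / 2 < v (z n) * cmod (deriv (T f) (z n))"
  proof
    fix n
    have "z n \<in> ball 0 1" "e / 2 < v (z n) * adj_Kz_norm T X nX (z n)" using z by auto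
    then obtain f where "f \<in> X" "nX f \<le> 1" "e / 2 < v (z n) * cmod (deriv (T f) (z n))"
      by (rule exists_unit_deriv_gt)
    then show "\<exists>f. f \<in> X \<and> nX f \<le> 1 \<and> e / 2 < v (z n) * cmod (deriv (T f) (z n))" by blast
  qed
  from choice[OF this] obtain F where "\<forall>n. F n \<in> X \<and> nX (F n) \<le> 1 \<and>
      e / 2 < v (z n) * cmod (deriv (T (F n)) (z n))"
    by blast
  with e z show ?thesis using that by blast
qed

lemma vanishing_adjoint_if_compact_Bv0:
  assumes compact: "compact_op T X nX v (Bv0 v)"
  shows "vanishes_at_circle (\<lambda>z. v z * adj_Kz_norm T X nX z)"
proof (rule ccontr)
  assume "\<not> ?thesis"
  then obtain e z F where e: "e > 0"
    and z: "\<And>n. 1 - 1 / real (Suc n) < cmod (z n) \<and> cmod (z n) < 1"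
    and F: "\<And>n. F n \<in> X \<and> nX (F n) \<le> 1"
    and big: "\<And>n. e / 2 < v (z n) * cmod (deriv (T (F n)) (z n))"
    using not_vanishing_adjoint_witnesses by blast
  obtain \<phi> :: "nat \<Rightarrow> nat" and g where \<phi>: "strict_mono \<phi>" and g: "g \<in> Bv0 v"
    and lim: "(\<lambda>n. Bv_norm v (\<lambda>w. T (F (\<phi> n)) w - g w)) \<longlonglongrightarrow> 0"
    using F by (rule compact_opE[OF compact])
  have "T (F (\<phi> n)) \<in> Bv v" for n using maps_Bv F by blast
  moreover have "e / 2 > 0" using e by simp
  ultimately obtain N \<rho> where "\<rho> < 1"
    and small: "\<And>n w. n \<ge> N \<Longrightarrow> \<rho> < cmod w \<Longrightarrow> cmod w < 1 \<Longrightarrow>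
      v w * cmod (deriv (T (F (\<phi> n))) w) < e / 2"
    using Bv_tendsto_Bv0_uniformly_small[OF weight _ g lim] by metis
  obtain m :: nat where "1 / (1 - \<rho>) < real m"
    using reals_Archimedean2 by blast
  define n where "n = max N m"
  have n: "N \<le> n" "1 / (1 - \<rho>) < real (Suc (\<phi> n))"
    using \<open>1 / (1 - \<rho>) < real m\<close> seq_suble[OF \<phi>, of n] by (auto simp: n_def)
  then have "1 / real (Suc (\<phi> n)) < 1 - \<rho>"
    using \<open>\<rho> < 1\<close> by (simp add: field_simps)
  then have "\<rho> < cmod (z (\<phi> n))"
    using z[of "\<phi> n"] by linarith
  then have "v (z (\<phi> n)) * cmod (deriv (T (F (\<phi> n))) (z (\<phi> n))) < e / 2"
    using small[OF n(1)] z[of "\<phi> n"] by blast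
  then show False using big[of "\<phi> n"] by linarith
qed

lemma T_in_Bv0_if_vanishing_adjoint:
  assumes van: "vanishes_at_circle (\<lambda>z. v z * adj_Kz_norm T X nX z)" and f: "f \<in> X"
  shows "T f \<in> Bv0 v"
proof -
  have "v z * cmod (deriv (T f) z) \<le> nX f * (v z * adj_Kz_norm T X nX z)" if z: "z \<in> ball 0 1" for z
    using mult_left_mono[OF deriv_le_adj_Kz_norm_mult[OF z f] less_imp_le[OF typical_weight_pos[OF weight z]]]
    by (simp add: mult_ac)
  then show ?thesis
    using maps_Bv f vanishes_at_circle_le_mult[OF van X_norm_nonneg[OF f]] by (simp add: Bv0_iff)
qed

lemma weighted_deriv_diff_le_adj_Kz_norm:
  assumes z: "z \<in> ball 0 1" and f: "f \<in> X" "nX f \<le> 1" and g: "g \<in> X"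
  shows "v z * cmod (deriv (T f) z - deriv (T g) z) \<le> (v z * adj_Kz_norm T X nX z) * (nX g + 1)"
proof -
  have "cmod (deriv (T f) z - deriv (T g) z) \<le> cmod (deriv (T f) z) + cmod (deriv (T g) z)"
    by (rule norm_triangle_ineq4)
  also have "\<dots> \<le> adj_Kz_norm T X nX z * nX f + adj_Kz_norm T X nX z * nX g"
    using deriv_le_adj_Kz_norm_mult[OF z] f g by (intro add_mono) auto
  also have "\<dots> \<le> adj_Kz_norm T X nX z * (nX g + 1)"
    using mult_left_mono[OF f(2) adj_Kz_norm_nonneg[OF z]] by (simp add: distrib_left)
  finally show ?thesis
    using mult_left_mono less_imp_le[OF typical_weight_pos[OF weight z]] by (simp add: mult.assoc)
qed

lemma compact_Bv0_if_vanishing_adjoint: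
  assumes van: "vanishes_at_circle (\<lambda>z. v z * adj_Kz_norm T X nX z)"
  shows "compact_op T X nX v (Bv0 v)"
proof (rule compact_opI)
  show "T f \<in> Bv0 v" if "f \<in> X" for f using T_in_Bv0_if_vanishing_adjoint[OF van that] .
  fix F :: "nat \<Rightarrow> hfun" assume F: "\<And>n. F n \<in> X \<and> nX (F n) \<le> 1"
  then obtain \<phi> :: "nat \<Rightarrow> nat" and f where \<phi>: "strict_mono \<phi>" and f: "f \<in> X"
    and uc: "uc_conv (F \<circ> \<phi>) f"
    by (rule X_unit_ball_uc_subseq)
  have "uc_conv (\<lambda>n. T (F (\<phi> n))) (T f)"
    using uc F X_HD f by (intro intrinsic_uc_conv[OF intrinsic]) (auto simp: comp_def)
  moreover have "\<exists>\<rho><1. \<forall>n z. \<rho> < cmod z \<and> cmod z < 1 \<longrightarrow>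
      v z * cmod (deriv (T (F (\<phi> n))) z - deriv (T f) z) < e" if e: "e > 0" for e
  proof -
    have A: "0 < nX f + 1" using X_norm_nonneg[OF f] by simp
    obtain \<rho> where "\<rho> < 1"
      and \<rho>: "\<And>z. \<rho> < cmod z \<Longrightarrow> cmod z < 1 \<Longrightarrow> v z * adj_Kz_norm T X nX z < e / (nX f + 1)"
      using vanishes_at_circleE[OF van, of "e / (nX f + 1)"] e A by auto
    have "v z * cmod (deriv (T (F (\<phi> n))) z - deriv (T f) z) < e"
      if "\<rho> < cmod z" "cmod z < 1" for n z
    proof -
      have "v z * cmod (deriv (T (F (\<phi> n))) z - deriv (T f) z)
          \<le> (v z * adj_Kz_norm T X nX z) * (nX f + 1)"
        using that F f by (intro weighted_deriv_diff_le_adj_Kz_norm) auto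
      also have "\<dots> < e / (nX f + 1) * (nX f + 1)"
        using \<rho>[OF that] A by (intro mult_strict_right_mono)
      finally show ?thesis using A by simp
    qed
    with \<open>\<rho> < 1\<close> show ?thesis by blast
  qed
  ultimately have "(\<lambda>n. Bv_norm v (\<lambda>w. T (F (\<phi> n)) w - T f w)) \<longlonglongrightarrow> 0"
    using maps_Bv F f by (intro Bv_tendsto_if_uc_conv[OF weight]) auto
  then show "\<exists>(\<phi>::nat \<Rightarrow> nat) g. strict_mono \<phi> \<and> g \<in> Bv0 v \<and>
      (\<lambda>n. Bv_norm v (\<lambda>z. T (F (\<phi> n)) z - g z)) \<longlonglongrightarrow> 0"
    using \<phi> T_in_Bv0_if_vanishing_adjoint[OF van f] by blast
qed

end

theorem theorem3p4:
  fixes v :: "complex \<Rightarrow> real" and X :: "hfun set" and nX :: "hfun \<Rightarrow> real"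
    and T :: "hfun \<Rightarrow> hfun" and C :: real
  assumes "typical_weight v"
    and "initial_space X nX"
    and "\<And>f r. f \<in> X \<Longrightarrow> 0 \<le> r \<Longrightarrow> r < 1 \<Longrightarrow> dil r f \<in> X \<and> nX (dil r f) \<le> C * nX f"
    and "intrinsic T"
    and "\<forall>f\<in>X. T f \<in> Bv v"
    and "\<exists>M. \<forall>f\<in>X. Bv_norm v (T f) \<le> M * nX f"
    and "\<And>f r. f \<in> X \<Longrightarrow> 0 \<le> r \<Longrightarrow> r < 1 \<Longrightarrow> T (dil r f) \<in> Bv0 v"
  shows "(compact_op T X nX v (Bv v) \<longleftrightarrow> compact_op T X nX v (Bv0 v)) \<and>
         (compact_op T X nX v (Bv0 v) \<longleftrightarrow>
            (\<forall>e>0. \<exists>\<rho><1. \<forall>z. \<rho> < cmod z \<and> cmod z < 1 \<longrightarrow>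
                 v z * adj_Kz_norm T X nX z < e))"
proof -
  interpret bounded_intrinsic_operator v X nX T
    using assms by unfold_locales
  show ?thesis
    using compact_op_Bv_if_Bv0 compact_Bv0_if_compact_Bv[OF assms(3,7)]
      vanishing_adjoint_if_compact_Bv0 compact_Bv0_if_vanishing_adjoint
    unfolding vanishes_at_circle_def by blast
qed

end
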